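(* Let $s,m$ be positive integers with $m$ odd, $n=sm$, and let $k$ be a positive integer with $t=\gcd(n,k)$ such that $\mathbb{F}_{2^t}\subseteq\mathbb{F}_{2^s}$ (i.e. $t\mid s$). Let $g(x)=x^{2^k+1}$ on $\mathbb{F}_{2^n}$. Then for all $a\in\mathbb{F}_{2^s}\setminus\{0\}$ and $b\in\mathbb{F}_{2^s}$, the equation $g(x+a)+g(x)=b$ has no solution $x\in\mathbb{F}_{2^n}\setminus\mathbb{F}_{2^s}$. *)

theory Defs
  imports Main
begin

text \<open>Inside a finite field F of order 2^n (s dividing n), the subfield F_{2^s} is the
set of fixed points of the s-th power of the Frobenius map x \<mapsto> x^2.\<close>
definition subfield_pow2 :: "nat \<Rightarrow> 'a::field set" where
  "subfield_pow2 s = {x. x ^ (2 ^ s) = x}"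

end

theory Submission
  imports Defs "HOL-Number_Theory.Residues"
begin

text \<open>Let \<open>\<sigma> y = y ^ 2 ^ s\<close> and \<open>q = 2 ^ k\<close>. In characteristic 2,
  \<open>(x + a) ^ (q + 1) + x ^ (q + 1) = L x + a ^ (q + 1)\<close> with the additive map
  \<open>L y = a y ^ q + a ^ q y\<close>. As \<open>\<sigma>\<close> fixes \<open>a\<close> and \<open>b\<close>, applying it to \<open>L x + a ^ (q + 1) = b\<close>
  gives \<open>L (\<sigma> x + x) = 0\<close>, i.e. \<open>(\<sigma> x + x) / a\<close> is fixed by \<open>y \<mapsto> y ^ q\<close>. So it lies in
  \<open>\<bbbF>(2 ^ k) \<inter> \<bbbF>(2 ^ n) = \<bbbF>(2 ^ t) \<subseteq> \<bbbF>(2 ^ s)\<close>, hence \<open>w = \<sigma> x + x\<close> is fixed by \<open>\<sigma>\<close> and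
  \<open>\<sigma> (\<sigma> x) = \<sigma> x + w = x\<close>. Thus \<open>x \<in> \<bbbF>(2 ^ 2s) \<inter> \<bbbF>(2 ^ sm) = \<bbbF>(2 ^ s)\<close> since \<open>m\<close> is odd.\<close>

lemma subfield_pow2_iff: "x \<in> subfield_pow2 s \<longleftrightarrow> x ^ 2 ^ s = x"
  by (simp add: subfield_pow2_def)

lemma power_power_pow2:
  fixes x :: "'a::monoid_mult"
  shows "(x ^ 2 ^ i) ^ 2 ^ j = x ^ 2 ^ (i + j)"
  by (simp only: power_add power_mult)

lemma subfield_pow2_mono:
  assumes "s dvd r"
  shows "subfield_pow2 s \<subseteq> subfield_pow2 r"
proof
  fix x :: 'a
  assume x: "x \<in> subfield_pow2 s"
  obtain v where r: "r = s * v"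
    using assms by blast
  have "x ^ 2 ^ (s * v) = x"
    by (induction v) (use x in \<open>simp_all add: subfield_pow2_iff power_power_pow2 [symmetric]\<close>)
  then show "x \<in> subfield_pow2 r"
    by (simp add: subfield_pow2_iff r)
qed

lemma subfield_pow2_Int_subset_gcd: "subfield_pow2 i \<inter> subfield_pow2 j \<subseteq> subfield_pow2 (gcd i j)"
proof (cases "i = 0")
  case False
  show ?thesis
  proof
    fix x :: 'a
    assume x: "x \<in> subfield_pow2 i \<inter> subfield_pow2 j"
    obtain u v where bezout: "i * u = j * v + gcd i j"
      using bezout_nat False by blast
    have "x \<in> subfield_pow2 (i * u)" and xjv: "x \<in> subfield_pow2 (j * v)"
      using x subfield_pow2_mono[OF dvd_triv_left] by blast+
    then have "x = x ^ 2 ^ (i * u)"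
      by (simp add: subfield_pow2_iff)
    also have "\<dots> = (x ^ 2 ^ (j * v)) ^ 2 ^ gcd i j"
      by (simp only: bezout power_power_pow2)
    also have "\<dots> = x ^ 2 ^ gcd i j"
      using xjv by (simp add: subfield_pow2_iff)
    finally show "x \<in> subfield_pow2 (gcd i j)"
      by (simp add: subfield_pow2_iff)
  qed
qed simp

lemma subfield_pow2_double_Int_odd:
  assumes "odd m"
  shows "subfield_pow2 (2 * s) \<inter> subfield_pow2 (s * m) \<subseteq> subfield_pow2 s"
proof -
  have "gcd (2 * s) (s * m) = s"
  proof -
    have "gcd 2 m = 1"
      using assms by (simp add: coprime_left_2_iff_odd flip: coprime_iff_gcd_eq_1)
    then show ?thesis
      by (metis gcd_mult_distrib_nat mult.commute mult_1_right)
  qed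
  then show ?thesis
    using subfield_pow2_Int_subset_gcd[of "2 * s" "s * m"] by simp
qed

lemma subfield_pow2_mult:
  "x \<in> subfield_pow2 s \<Longrightarrow> y \<in> subfield_pow2 s \<Longrightarrow> x * y \<in> subfield_pow2 s"
  by (simp add: subfield_pow2_iff power_mult_distrib)

text \<open>The library's \<open>finite_field_power_card_eq_same\<close> needs the sort \<open>finite_field\<close>, which a
  type variable of sort \<open>{field, finite}\<close> does not have; we use Lagrange's theorem in the
  group of units instead.\<close>
lemma power_card_UNIV_eq_self:
  fixes x :: "'a::{field,finite}"
  shows "x ^ card (UNIV :: 'a set) = x"
proof (cases "x = 0")
  case True
  then show ?thesis
    using finite_UNIV_card_ge_0[where ?'a = 'a] by simp
next
  case False
  define G where "G = \<lparr>carrier = UNIV - {0 :: 'a}, monoid.mult = (*), one = 1 :: 'a\<rparr>"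
  interpret group G
  proof (rule groupI)
    fix y assume "y \<in> carrier G"
    then show "\<exists>z\<in>carrier G. z \<otimes>\<^bsub>G\<^esub> y = \<one>\<^bsub>G\<^esub>"
      by (intro bexI[of _ "inverse y"]) (auto simp: G_def)
  qed (auto simp: G_def mult.assoc)
  have nat_pow_eq: "y [^]\<^bsub>G\<^esub> j = y ^ j" for y :: 'a and j :: nat
    by (induction j) (simp_all add: G_def)
  have "order G = card (UNIV :: 'a set) - 1"
    by (simp add: order_def G_def card_Diff_singleton)
  moreover have "x \<in> carrier G"
    using False by (simp add: G_def)
  ultimately have "x ^ (card (UNIV :: 'a set) - 1) = 1"
    using pow_order_eq_1[of x] unfolding nat_pow_eq by (simp add: G_def)
  then have "x * x ^ (card (UNIV :: 'a set) - 1) = x"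
    by simp
  then show ?thesis
    using finite_UNIV_card_ge_0[where ?'a = 'a] by (simp flip: power_Suc)
qed

lemma subfield_pow2_eq_UNIV:
  assumes "card (UNIV :: 'a::{field,finite} set) = 2 ^ n"
  shows "subfield_pow2 n = (UNIV :: 'a set)"
  using power_card_UNIV_eq_self[where ?'a = 'a] by (simp add: subfield_pow2_def assms)

lemma CHAR_eq_2_if_card_pow2:
  assumes "card (UNIV :: 'a::{field,finite} set) = 2 ^ n"
  shows "CHAR('a) = 2"
proof -
  have "prime CHAR('a)"
    by (intro prime_CHAR_semidom finite_imp_CHAR_pos) simp
  moreover have "CHAR('a) dvd 2 ^ n"
    using CHAR_dvd_CARD[where ?'a = 'a] assms by simp
  ultimately have "CHAR('a) dvd 2"
    using prime_dvd_power by blast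
  then show ?thesis
    using \<open>prime CHAR('a)\<close> by (simp add: primes_dvd_imp_eq)
qed

lemma CHAR_2_two_eq_0:
  assumes "CHAR('a::semiring_1) = 2"
  shows "(2 :: 'a) = 0"
  using of_nat_CHAR[where ?'a = 'a] assms by simp

lemma CHAR_2_add_eq_0_iff:
  fixes x y :: "'a::ring_1"
  assumes "CHAR('a) = 2"
  shows "x + y = 0 \<longleftrightarrow> x = y"
proof -
  have "y + y = 0"
    using CHAR_2_two_eq_0[OF assms] by (metis mult_2 mult_zero_left)
  then have "- y = y"
    by (rule minus_unique)
  then show ?thesis
    using eq_neg_iff_add_eq_0[of x y] by simp
qed

lemma CHAR_2_add_pow2:
  fixes x y :: "'a::comm_semiring_1"
  assumes "CHAR('a) = 2"
  shows "(x + y) ^ 2 ^ j = x ^ 2 ^ j + y ^ 2 ^ j"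
  using freshmans_dream'[of "2 ^ j" j x y] assms by simp

lemma divide_power_eq_self:
  fixes a w :: "'a::field"
  assumes "a \<noteq> 0" and "a * w ^ q = a ^ q * w"
  shows "(w / a) ^ q = w / a"
proof -
  have "w ^ q = a ^ q * w / a"
    using assms by (simp add: field_simps)
  then show ?thesis
    using assms by (simp add: power_divide)
qed

lemma gold_derivative_CHAR_2:
  fixes a x :: "'a::comm_ring_1"
  assumes char: "CHAR('a) = 2"
  shows "(x + a) ^ (2 ^ k + 1) + x ^ (2 ^ k + 1) = a * x ^ 2 ^ k + a ^ 2 ^ k * x + a ^ (2 ^ k + 1)"
  by (simp add: power_add CHAR_2_add_pow2[OF char] algebra_simps CHAR_2_two_eq_0[OF char])

lemma gold_derivative_frobenius_divide_in_subfield_pow2: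
  fixes a b x :: "'a::field"
  assumes char: "CHAR('a) = 2"
    and a: "a \<in> subfield_pow2 s" "a \<noteq> 0" and b: "b \<in> subfield_pow2 s"
    and eq: "(x + a) ^ (2 ^ k + 1) + x ^ (2 ^ k + 1) = b"
  shows "(x ^ 2 ^ s + x) / a \<in> subfield_pow2 k"
proof -
  define L where "L y = a * y ^ 2 ^ k + a ^ 2 ^ k * y" for y
  have L_add: "L (y + z) = L y + L z" for y z
    by (simp add: L_def CHAR_2_add_pow2[OF char] algebra_simps)
  have swap: "(y ^ 2 ^ k) ^ 2 ^ s = (y ^ 2 ^ s) ^ 2 ^ k" for y :: 'a
    by (simp add: power_power_pow2 add.commute)
  have a_fixed: "a ^ 2 ^ s = a"
    using a by (simp add: subfield_pow2_iff)
  have L_frobenius: "L (y ^ 2 ^ s) = L y ^ 2 ^ s" for y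
    by (simp add: L_def CHAR_2_add_pow2[OF char] power_mult_distrib swap a_fixed)
  have c_fixed: "(a ^ (2 ^ k + 1)) ^ 2 ^ s = a ^ (2 ^ k + 1)"
    by (metis a_fixed power_mult mult.commute)
  have "L x + a ^ (2 ^ k + 1) = b"
    unfolding L_def gold_derivative_CHAR_2[OF char, symmetric] by (rule eq)
  moreover from this have "L (x ^ 2 ^ s) + a ^ (2 ^ k + 1) = b"
    using b by (metis CHAR_2_add_pow2[OF char] L_frobenius c_fixed subfield_pow2_iff)
  ultimately have "L (x ^ 2 ^ s) = L x"
    by (metis add_right_cancel)
  then have "L (x ^ 2 ^ s + x) = 0"
    by (simp add: L_add CHAR_2_two_eq_0[OF char])
  then have "a * (x ^ 2 ^ s + x) ^ 2 ^ k = a ^ 2 ^ k * (x ^ 2 ^ s + x)"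
    by (simp add: L_def CHAR_2_add_eq_0_iff[OF char])
  then show ?thesis
    using a by (simp add: subfield_pow2_iff divide_power_eq_self)
qed

lemma add_frobenius_in_subfield_pow2_imp_double:
  fixes x :: "'a::field"
  assumes char: "CHAR('a) = 2" and w: "x ^ 2 ^ s + x \<in> subfield_pow2 s"
  shows "x \<in> subfield_pow2 (2 * s)"
proof -
  have frobenius_x: "(x ^ 2 ^ s + x) + x = x ^ 2 ^ s"
    by (simp add: add.assoc CHAR_2_two_eq_0[OF char])
  have "x ^ 2 ^ (2 * s) = ((x ^ 2 ^ s + x) + x) ^ 2 ^ s"
    unfolding frobenius_x by (simp only: power_power_pow2 mult_2)
  also have "\<dots> = (x ^ 2 ^ s + x) + x ^ 2 ^ s"
    using w by (simp only: subfield_pow2_iff CHAR_2_add_pow2[OF char, of "x ^ 2 ^ s + x" x])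
  also have "\<dots> = (x ^ 2 ^ s + x ^ 2 ^ s) + x"
    by (simp only: add_ac)
  also have "\<dots> = x"
    by (simp add: CHAR_2_two_eq_0[OF char])
  finally show ?thesis
    by (simp add: subfield_pow2_iff)
qed

theorem proposition2p5:
  fixes s m n k :: nat
  assumes card: "card (UNIV :: 'a::{field,finite} set) = 2 ^ n"
    and "s > 0" and "m > 0" and "odd m" and "n = s * m"
    and "k > 0" and "gcd n k dvd s"
  shows "\<forall>a \<in> subfield_pow2 s - {0::'a}. \<forall>b \<in> subfield_pow2 s.
           \<not> (\<exists>x::'a. x \<notin> subfield_pow2 s \<and>
                (x + a) ^ (2 ^ k + 1) + x ^ (2 ^ k + 1) = b)"
proof (intro ballI notI)
  fix a b :: 'a
  assume a: "a \<in> subfield_pow2 s - {0}" and b: "b \<in> subfield_pow2 s"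
    and "\<exists>x. x \<notin> subfield_pow2 s \<and> (x + a) ^ (2 ^ k + 1) + x ^ (2 ^ k + 1) = b"
  then obtain x where x: "x \<notin> subfield_pow2 s"
    and eq: "(x + a) ^ (2 ^ k + 1) + x ^ (2 ^ k + 1) = b"
    by blast
  have char: "CHAR('a) = 2" and all: "subfield_pow2 n = (UNIV :: 'a set)"
    using card by (rule CHAR_eq_2_if_card_pow2, rule subfield_pow2_eq_UNIV)
  define w where "w = x ^ 2 ^ s + x"
  have "w / a \<in> subfield_pow2 k"
    unfolding w_def using char a b eq by (blast intro: gold_derivative_frobenius_divide_in_subfield_pow2)
  then have "w / a \<in> subfield_pow2 s"
    using subfield_pow2_Int_subset_gcd[of n k] subfield_pow2_mono[OF \<open>gcd n k dvd s\<close>] all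
    by blast
  then have "w / a * a \<in> subfield_pow2 s"
    using a by (blast intro: subfield_pow2_mult)
  then have "x \<in> subfield_pow2 (2 * s)"
    using a char by (simp add: w_def add_frobenius_in_subfield_pow2_imp_double)
  then have "x \<in> subfield_pow2 s"
    using subfield_pow2_double_Int_odd[OF \<open>odd m\<close>, of s] all \<open>n = s * m\<close> by blast
  with x show False ..
qed

end
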